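(* For every fixed $d\ge 0$, the class $\mathcal{S}_d$ is monotone and tiny.
   Context: For $d\ge0$, $\mathcal{S}_d$ is the class of all graphs $G$ such that for every integer $k$ with $1000^{10(d+1)}\le k\le |V(G)|$, every $k$-vertex subgraph of $G$ has at most $k-1+k/\ln k$ edges. A class is monotone if closed under isomorphism and under taking subgraphs; it is tiny if it is hereditary (closed under induced subgraphs) and there is a constant $c$ such that for every $n$ it contains at most $c^n$ unlabeled (up to isomorphism) $n$-vertex graphs. *)

theory Defs
  imports Complex_Main
begin

text \<open>A finite simple graph with vertices of type 'a: a pair (V, E) where V is a
finite vertex set and E is a set of 2-element subsets of V.\<close>

type_synonym 'a graph = "'a set \<times> 'a set set"

definition verts :: "'a graph \<Rightarrow> 'a set" where "verts G = fst G"
definition edges :: "'a graph \<Rightarrow> 'a set set" where "edges G = snd G"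

definition wf_graph :: "'a graph \<Rightarrow> bool" where
  "wf_graph G \<longleftrightarrow> finite (verts G) \<and>
     (\<forall>e\<in>edges G. \<exists>u v. e = {u, v} \<and> u \<noteq> v \<and> u \<in> verts G \<and> v \<in> verts G)"

definition subgraph :: "'a graph \<Rightarrow> 'a graph \<Rightarrow> bool" where
  "subgraph H G \<longleftrightarrow> wf_graph H \<and> verts H \<subseteq> verts G \<and> edges H \<subseteq> edges G"

definition induced_subgraph :: "'a graph \<Rightarrow> 'a graph \<Rightarrow> bool" where
  "induced_subgraph H G \<longleftrightarrow> verts H \<subseteq> verts G \<and> edges H = {e \<in> edges G. e \<subseteq> verts H}"

definition graph_iso :: "'a graph \<Rightarrow> 'a graph \<Rightarrow> bool" where
  "graph_iso G H \<longleftrightarrow> (\<exists>f. bij_betw f (verts G) (verts H) \<and> edges H = (\<lambda>e. f ` e) ` edges G)"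

definition S_class :: "nat \<Rightarrow> 'a graph set" where
  "S_class d = {G. wf_graph G \<and>
     (\<forall>k::nat. 1000 ^ (10 * (d + 1)) \<le> k \<and> k \<le> card (verts G) \<longrightarrow>
        (\<forall>H. subgraph H G \<and> card (verts H) = k \<longrightarrow>
           real (card (edges H)) \<le> real k - 1 + real k / ln (real k)))}"

definition monotone_class :: "'a graph set \<Rightarrow> bool" where
  "monotone_class C \<longleftrightarrow>
     (\<forall>G H. G \<in> C \<and> wf_graph H \<and> graph_iso G H \<longrightarrow> H \<in> C) \<and>
     (\<forall>G H. G \<in> C \<and> subgraph H G \<longrightarrow> H \<in> C)"

definition hereditary_class :: "'a graph set \<Rightarrow> bool" where
  "hereditary_class C \<longleftrightarrow> (\<forall>G H. G \<in> C \<and> induced_subgraph H G \<longrightarrow> H \<in> C)"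

text \<open>Number of unlabeled n-vertex graphs in C = number of isomorphism classes.\<close>
definition tiny_class :: "'a graph set \<Rightarrow> bool" where
  "tiny_class C \<longleftrightarrow> hereditary_class C \<and>
     (\<exists>c::real. \<forall>n::nat.
        let Cn = {G \<in> C. card (verts G) = n} in
        finite (Cn // {(G, H). G \<in> Cn \<and> H \<in> Cn \<and> graph_iso G H}) \<and>
        real (card (Cn // {(G, H). G \<in> Cn \<and> H \<in> Cn \<and> graph_iso G H})) \<le> c ^ n)"

end

theory Submission
  imports Defs
begin

text \<open>Closure under isomorphisms and subgraphs is immediate, since the defining condition only
  speaks about subgraphs. For the counting, a graph of the class is cut into its connected
  components. A component with \<open>s\<close> vertices is described up to isomorphism by a spanning tree,
  coded by a word of length at most \<open>2 s\<close> (a depth-first walk), together with the set of its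
  remaining edges. As the component is a subgraph of the graph, there are at most \<open>s / ln s\<close>
  such edges once \<open>s\<close> exceeds the threshold, and below the threshold at most \<open>s\<^sup>2\<close>; so there are
  at most \<open>c\<^sup>s\<close> codes for a component, since \<open>(s\<^sup>2 + 1)\<^bsup>s / ln s\<^esup> \<le> e\<^bsup>3s\<^esup>\<close>. Gluing the codes of
  the components, whose sizes form a composition of \<open>n\<close>, gives at most \<open>(2c)\<^sup>n\<close> codes for all
  graphs on \<open>n\<close> vertices, and every isomorphism class is hit by one of them.\<close>

lemma verts_pair [simp]: "verts (V, E) = V"
  and edges_pair [simp]: "edges (V, E) = E"
  by (simp_all add: verts_def edges_def)

lemma wf_graph_edgeD:
  "wf_graph G \<Longrightarrow> e \<in> edges G \<Longrightarrow> \<exists>u v. e = {u, v} \<and> u \<noteq> v \<and> u \<in> verts G \<and> v \<in> verts G"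
  unfolding wf_graph_def by blast

lemma wf_graph_edges_subset: "wf_graph G \<Longrightarrow> \<Union>(edges G) \<subseteq> verts G"
  by (blast dest: wf_graph_edgeD)

lemma subgraph_trans: "subgraph H G \<Longrightarrow> subgraph K H \<Longrightarrow> subgraph K G"
  unfolding subgraph_def by blast

lemma subgraph_card_verts_le: "wf_graph G \<Longrightarrow> subgraph H G \<Longrightarrow> card (verts H) \<le> card (verts G)"
  unfolding subgraph_def wf_graph_def by (simp add: card_mono)

definition induced :: "'a graph \<Rightarrow> 'a set \<Rightarrow> 'a graph" where
  "induced G X = (X, {e \<in> edges G. e \<subseteq> X})"

lemma subgraph_induced:
  assumes "wf_graph G" "X \<subseteq> verts G"
  shows "subgraph (induced G X) G"
  using assms finite_subset unfolding subgraph_def induced_def wf_graph_def by fastforce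

lemma induced_subgraph_imp_subgraph:
  assumes "wf_graph G" "induced_subgraph H G"
  shows "subgraph H G"
proof -
  have "H = induced G (verts H)"
    using assms(2) by (simp add: induced_subgraph_def induced_def prod_eq_iff verts_def edges_def)
  then show ?thesis
    using assms subgraph_induced induced_subgraph_def by metis
qed

definition graph_union :: "'a graph \<Rightarrow> 'a graph \<Rightarrow> 'a graph" where
  "graph_union G H = (verts G \<union> verts H, edges G \<union> edges H)"

definition graph_image :: "('a \<Rightarrow> 'b) \<Rightarrow> 'a graph \<Rightarrow> 'b graph" where
  "graph_image f G = (f ` verts G, (`) f ` edges G)"

lemma graph_iso_iff_graph_image:
  "graph_iso G H \<longleftrightarrow> (\<exists>f. inj_on f (verts G) \<and> H = graph_image f G)"
  unfolding graph_iso_def graph_image_def bij_betw_def prod_eq_iff verts_def edges_def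
  by auto

lemma graph_image_comp: "graph_image g (graph_image f G) = graph_image (g \<circ> f) G"
  by (simp add: graph_image_def image_comp)

lemma graph_image_cong:
  assumes "\<Union>(edges G) \<subseteq> verts G" "\<And>x. x \<in> verts G \<Longrightarrow> f x = g x"
  shows "graph_image f G = graph_image g G"
proof -
  have "f ` e = g ` e" if "e \<in> edges G" for e
    using assms that by (intro image_cong) auto
  then show ?thesis
    unfolding graph_image_def using assms(2) by (metis image_cong)
qed

lemma graph_image_id: "graph_image id G = G"
  by (simp add: graph_image_def verts_def edges_def)

lemma graph_image_inv_into:
  assumes "\<Union>(edges G) \<subseteq> verts G" "inj_on f (verts G)"
  shows "graph_image (inv_into (verts G) f) (graph_image f G) = G"
proof -
  have "graph_image (inv_into (verts G) f) (graph_image f G) = graph_image id G"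
    unfolding graph_image_comp using assms by (intro graph_image_cong) auto
  then show ?thesis by (simp add: graph_image_id)
qed

lemma edges_graph_image_subset:
  "\<Union>(edges G) \<subseteq> verts G \<Longrightarrow> \<Union>(edges (graph_image f G)) \<subseteq> verts (graph_image f G)"
  unfolding graph_image_def by auto

lemma card_graph_image:
  assumes "\<Union>(edges G) \<subseteq> verts G" "inj_on f (verts G)"
  shows "card (verts (graph_image f G)) = card (verts G)"
    and "card (edges (graph_image f G)) = card (edges G)"
proof -
  have "inj_on ((`) f) (edges G)"
    using assms inj_on_subset by (intro inj_on_image) blast
  then show "card (edges (graph_image f G)) = card (edges G)"
    by (simp add: graph_image_def card_image)
qed (use assms in \<open>simp add: graph_image_def card_image\<close>)

lemma subgraph_graph_image:
  assumes "subgraph H G" "inj_on f (verts G)"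
  shows "subgraph (graph_image f H) (graph_image f G)"
proof -
  have inj: "inj_on f (verts H)"
    using assms inj_on_subset unfolding subgraph_def by blast
  have "wf_graph (graph_image f H)"
  proof -
    have "\<exists>u v. e' = {u, v} \<and> u \<noteq> v \<and> u \<in> f ` verts H \<and> v \<in> f ` verts H"
      if e': "e' \<in> (`) f ` edges H" for e'
    proof -
      obtain e where e: "e \<in> edges H" "e' = f ` e" using e' by blast
      obtain u v where "e = {u, v}" "u \<noteq> v" "u \<in> verts H" "v \<in> verts H"
        using assms(1) e(1) unfolding subgraph_def by (blast dest: wf_graph_edgeD)
      then show ?thesis using e(2) inj_on_contraD[OF inj] by auto
    qed
    then show ?thesis
      using assms(1) unfolding subgraph_def wf_graph_def graph_image_def by auto
  qed
  then show ?thesis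
    using assms(1) unfolding subgraph_def graph_image_def by auto
qed

lemma graph_image_graph_union:
  "graph_image f (graph_union G H) = graph_union (graph_image f G) (graph_image f H)"
  by (simp add: graph_image_def graph_union_def image_Un)

lemma graph_image_if_union:
  assumes "\<Union>(edges G\<^sub>1) \<subseteq> verts G\<^sub>1" "\<Union>(edges G\<^sub>2) \<subseteq> verts G\<^sub>2"
    and "verts G\<^sub>1 \<inter> verts G\<^sub>2 = {}"
  shows "graph_image (\<lambda>x. if x \<in> verts G\<^sub>1 then f x else g x) (graph_union G\<^sub>1 G\<^sub>2) =
           graph_union (graph_image f G\<^sub>1) (graph_image g G\<^sub>2)"
proof -
  let ?h = "\<lambda>x. if x \<in> verts G\<^sub>1 then f x else g x"
  have "graph_image ?h G\<^sub>1 = graph_image f G\<^sub>1" "graph_image ?h G\<^sub>2 = graph_image g G\<^sub>2"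
    using assms by (auto intro!: graph_image_cong)
  then show ?thesis
    by (simp only: graph_image_graph_union)
qed

lemma inj_on_if_graph_union:
  assumes "inj_on f (verts G\<^sub>1)" "inj_on g (verts G\<^sub>2)" "f ` verts G\<^sub>1 \<inter> g ` verts G\<^sub>2 = {}"
  shows "inj_on (\<lambda>x. if x \<in> verts G\<^sub>1 then f x else g x) (verts (graph_union G\<^sub>1 G\<^sub>2))"
proof (rule inj_onI)
  fix x y
  assume "x \<in> verts (graph_union G\<^sub>1 G\<^sub>2)" "y \<in> verts (graph_union G\<^sub>1 G\<^sub>2)"
    and eq: "(if x \<in> verts G\<^sub>1 then f x else g x) = (if y \<in> verts G\<^sub>1 then f y else g y)"
  then have "x \<in> verts G\<^sub>1 \<or> x \<in> verts G\<^sub>2" "y \<in> verts G\<^sub>1 \<or> y \<in> verts G\<^sub>2"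
    by (simp_all add: graph_union_def)
  then show "x = y"
    using eq assms by (cases "x \<in> verts G\<^sub>1"; cases "y \<in> verts G\<^sub>1") (auto dest: inj_onD)
qed


section \<open>Rooted trees encoded by words\<close>

text \<open>A word drives a stack machine: \<open>True\<close> creates the next fresh vertex as a child of the
  vertex on top of the stack and pushes it, \<open>False\<close> pops the stack (never emptying it).\<close>

fun tree_run :: "bool list \<Rightarrow> nat list \<Rightarrow> nat \<Rightarrow> (nat \<times> nat) list \<times> nat list \<times> nat" where
  "tree_run [] st nx = ([], st, nx)"
| "tree_run (True # w) st nx =
     (case tree_run w (nx # st) (Suc nx) of (L, st', nx') \<Rightarrow> ((hd st, nx) # L, st', nx'))"
| "tree_run (False # w) st nx = tree_run w (if length st \<le> 1 then st else tl st) nx"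

definition tree_edges :: "bool list \<Rightarrow> (nat \<times> nat) list" where
  "tree_edges w = fst (tree_run w [0] 1)"

definition tree_size :: "bool list \<Rightarrow> nat" where
  "tree_size w = snd (snd (tree_run w [0] 1))"

lemma tree_run_append:
  "tree_run (w\<^sub>1 @ w\<^sub>2) st nx =
     (case tree_run w\<^sub>1 st nx of (L\<^sub>1, st\<^sub>1, nx\<^sub>1) \<Rightarrow>
        (case tree_run w\<^sub>2 st\<^sub>1 nx\<^sub>1 of (L\<^sub>2, st\<^sub>2, nx\<^sub>2) \<Rightarrow> (L\<^sub>1 @ L\<^sub>2, st\<^sub>2, nx\<^sub>2)))"
proof (induction w\<^sub>1 arbitrary: st nx)
  case (Cons c w\<^sub>1)
  then show ?case by (cases c) (auto split: prod.split)
qed (simp split: prod.split)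

lemma tree_run_invariant:
  assumes "\<forall>a\<in>set st. a < nx" "st \<noteq> []" "tree_run w st nx = (L, st', nx')"
  shows "map snd L = [nx..<nx'] \<and> (\<forall>(a, b)\<in>set L. a < b) \<and> (\<forall>a\<in>set st'. a < nx') \<and>
    st' \<noteq> [] \<and> nx \<le> nx'"
  using assms
proof (induction w arbitrary: st nx L st' nx')
  case (Cons c w)
  show ?case
  proof (cases c)
    case True
    obtain L\<^sub>1 where run: "tree_run w (nx # st) (Suc nx) = (L\<^sub>1, st', nx')"
      and L: "L = (hd st, nx) # L\<^sub>1"
      using Cons.prems True by (auto split: prod.splits)
    have IH: "map snd L\<^sub>1 = [Suc nx..<nx'] \<and> (\<forall>(a, b)\<in>set L\<^sub>1. a < b) \<and>
        (\<forall>a\<in>set st'. a < nx') \<and> st' \<noteq> [] \<and> Suc nx \<le> nx'"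
      using Cons.prems by (intro Cons.IH[OF _ _ run]) auto
    have "hd st < nx" using Cons.prems by (cases st) auto
    moreover have "[nx..<nx'] = nx # [Suc nx..<nx']" using IH by (simp add: upt_rec)
    ultimately show ?thesis using IH L by auto
  next
    case False
    let ?st = "if length st \<le> 1 then st else tl st"
    have "\<forall>a\<in>set ?st. a < nx" "?st \<noteq> []" "tree_run w ?st nx = (L, st', nx')"
      using Cons.prems False by (cases st; auto)+
    then show ?thesis by (rule Cons.IH)
  qed
qed simp

lemma tree_edges_size: "map snd (tree_edges w) = [1..<tree_size w] \<and> (\<forall>(a, b)\<in>set (tree_edges w). a < b)"
  using tree_run_invariant[of "[0]" 1 w] unfolding tree_edges_def tree_size_def
  by (cases "tree_run w [0] 1") auto

lemma tree_edges_bounds: "(a, b) \<in> set (tree_edges w) \<Longrightarrow> a < b \<and> b < tree_size w"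
  using tree_edges_size[of w] by (metis (no_types, lifting) atLeastLessThan_iff case_prodD
      imageI set_map set_upt snd_conv)

lemma card_tree_edges: "card (set (tree_edges w)) = tree_size w - 1"
proof -
  have "distinct (tree_edges w)"
    using tree_edges_size[of w] distinct_map by (metis distinct_upt)
  then show ?thesis
    using tree_edges_size[of w] by (metis distinct_card length_map length_upt)
qed

definition shift_after :: "nat \<Rightarrow> nat \<Rightarrow> nat" where
  "shift_after j a = (if a \<le> j then a else Suc a)"

lemma atLeastLessThan_Suc_shift_after:
  assumes "j < s"
  shows "{0..<Suc s} = insert (Suc j) (shift_after j ` {0..<s})"
proof (intro set_eqI iffI)
  fix i assume i: "i \<in> {0..<Suc s}"
  consider "i \<le> j" | "i = Suc j" | "Suc j < i" by linarith
  then show "i \<in> insert (Suc j) (shift_after j ` {0..<s})"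
  proof cases
    case 1
    then show ?thesis using assms by (intro insertI2 image_eqI[of _ _ i]) (auto simp: shift_after_def)
  next
    case 3
    then show ?thesis using i by (intro insertI2 image_eqI[of _ _ "i - 1"]) (auto simp: shift_after_def)
  qed simp
qed (use assms in \<open>auto simp: shift_after_def\<close>)

lemma tree_run_shift_after:
  assumes "j < nx" "st \<noteq> []"
  shows "tree_run w (map (shift_after j) st) (shift_after j nx) =
    (case tree_run w st nx of (L, st', nx') \<Rightarrow>
       (map (map_prod (shift_after j) (shift_after j)) L, map (shift_after j) st', shift_after j nx'))"
  using assms
proof (induction w arbitrary: st nx)
  case (Cons c w)
  show ?case
  proof (cases c)
    case True
    have "Suc (shift_after j nx) = shift_after j (Suc nx)"
      using Cons.prems by (simp add: shift_after_def)
    moreover have "hd (map (shift_after j) st) = shift_after j (hd st)"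
      using Cons.prems by (cases st) auto
    moreover have "tree_run w (map (shift_after j) (nx # st)) (shift_after j (Suc nx)) =
      (case tree_run w (nx # st) (Suc nx) of (L, st', nx') \<Rightarrow>
        (map (map_prod (shift_after j) (shift_after j)) L, map (shift_after j) st', shift_after j nx'))"
      using Cons.prems by (intro Cons.IH) auto
    ultimately show ?thesis using True by (auto split: prod.splits)
  next
    case False
    have "(if length (map (shift_after j) st) \<le> 1 then map (shift_after j) st else tl (map (shift_after j) st)) =
      map (shift_after j) (if length st \<le> 1 then st else tl st)"
      by (cases st) auto
    moreover have "(if length st \<le> 1 then st else tl st) \<noteq> []" using Cons.prems by (cases st) auto
    ultimately show ?thesis using False Cons.prems Cons.IH by simp
  qed
qed simp

lemma tree_run_prefix_creating:
  assumes "j < tree_size w"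
  obtains w\<^sub>1 w\<^sub>2 L\<^sub>1 st\<^sub>1 where "w = w\<^sub>1 @ w\<^sub>2" "tree_run w\<^sub>1 [0] 1 = (L\<^sub>1, st\<^sub>1, Suc j)"
    "st\<^sub>1 \<noteq> []" "hd st\<^sub>1 = j" "\<forall>a\<in>set st\<^sub>1. a \<le> j"
  using assms
proof (induction w arbitrary: thesis rule: rev_induct)
  case Nil
  then show ?case by (auto simp: tree_size_def)
next
  case (snoc c w)
  show ?case
  proof (cases "j < tree_size w")
    case True
    then show ?thesis by (auto intro: snoc.IH[OF snoc.prems(1)[of _ "_ @ [c]"]])
  next
    case False
    obtain L st nx where run: "tree_run w [0] 1 = (L, st, nx)" by (cases "tree_run w [0] 1")
    have nx: "nx = tree_size w" using run by (simp add: tree_size_def)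
    have st: "\<forall>a\<in>set st. a < nx" "st \<noteq> []" using tree_run_invariant[OF _ _ run] by auto
    have "tree_size (w @ [c]) = (if c then Suc nx else nx)"
      unfolding tree_size_def tree_run_append using run st by (cases c) auto
    then have c: "c" and j: "j = nx" using snoc.prems(2) False nx by (auto split: if_splits)
    have "tree_run (w @ [True]) [0] 1 = (L @ [(hd st, nx)], nx # st, Suc nx)"
      unfolding tree_run_append using run by simp
    then show ?thesis
      using snoc.prems(1)[of "w @ [c]" "[]" "L @ [(hd st, nx)]" "nx # st"] c j st(1)
      by (auto simp: less_imp_le)
  qed
qed

text \<open>Attaching a new leaf to vertex \<open>j\<close>: insert \<open>[True, False]\<close> right after vertex \<open>j\<close> is
  created; the new leaf becomes vertex \<open>Suc j\<close> and all later vertices move up by one.\<close>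

lemma tree_word_add_leaf:
  assumes "j < tree_size w"
  obtains w' where "length w' = length w + 2" "tree_size w' = Suc (tree_size w)"
    "set (tree_edges w') = map_prod (shift_after j) (shift_after j) ` set (tree_edges w) \<union> {(j, Suc j)}"
proof -
  obtain w\<^sub>1 w\<^sub>2 L\<^sub>1 st\<^sub>1 where w: "w = w\<^sub>1 @ w\<^sub>2" and run\<^sub>1: "tree_run w\<^sub>1 [0] 1 = (L\<^sub>1, st\<^sub>1, Suc j)"
    and st\<^sub>1: "st\<^sub>1 \<noteq> []" "hd st\<^sub>1 = j" "\<forall>a\<in>set st\<^sub>1. a \<le> j"
    using tree_run_prefix_creating[OF assms] by blast
  have L\<^sub>1: "a \<le> j \<and> b \<le> j" if "(a, b) \<in> set L\<^sub>1" for a b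
  proof -
    have "map snd L\<^sub>1 = [1..<Suc j]" "\<forall>(a, b)\<in>set L\<^sub>1. a < b"
      using tree_run_invariant[OF _ _ run\<^sub>1] by simp_all
    moreover have "b \<in> set (map snd L\<^sub>1)" using that by force
    ultimately show ?thesis using that by fastforce
  qed
  obtain L\<^sub>2 st\<^sub>2 nx\<^sub>2 where run\<^sub>2: "tree_run w\<^sub>2 st\<^sub>1 (Suc j) = (L\<^sub>2, st\<^sub>2, nx\<^sub>2)"
    by (cases "tree_run w\<^sub>2 st\<^sub>1 (Suc j)")
  have "map (shift_after j) st\<^sub>1 = st\<^sub>1" using st\<^sub>1(3) by (intro map_idI) (auto simp: shift_after_def)
  then have run\<^sub>2': "tree_run w\<^sub>2 st\<^sub>1 (Suc (Suc j)) =
      (map (map_prod (shift_after j) (shift_after j)) L\<^sub>2, map (shift_after j) st\<^sub>2, shift_after j nx\<^sub>2)"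
    using tree_run_shift_after[of j "Suc j" st\<^sub>1 w\<^sub>2] st\<^sub>1 run\<^sub>2 by (simp add: shift_after_def)
  have "\<forall>a\<in>set st\<^sub>1. a < Suc j" using st\<^sub>1(3) by auto
  then have "Suc j \<le> nx\<^sub>2" using tree_run_invariant[OF _ st\<^sub>1(1) run\<^sub>2] by blast
  define w' where "w' = w\<^sub>1 @ [True, False] @ w\<^sub>2"
  have run': "tree_run w' [0] 1 = (L\<^sub>1 @ [(j, Suc j)] @ map (map_prod (shift_after j) (shift_after j)) L\<^sub>2,
      map (shift_after j) st\<^sub>2, shift_after j nx\<^sub>2)"
    unfolding w'_def tree_run_append using run\<^sub>1 run\<^sub>2' st\<^sub>1 by (cases st\<^sub>1) auto
  have run: "tree_run w [0] 1 = (L\<^sub>1 @ L\<^sub>2, st\<^sub>2, nx\<^sub>2)"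
    unfolding w tree_run_append using run\<^sub>1 run\<^sub>2 by simp
  have "map_prod (shift_after j) (shift_after j) ` set L\<^sub>1 = set L\<^sub>1"
    using L\<^sub>1 by (auto simp: shift_after_def map_prod_def intro!: image_eqI)
  then have "set (tree_edges w') =
      map_prod (shift_after j) (shift_after j) ` set (tree_edges w) \<union> {(j, Suc j)}"
    using run run' unfolding tree_edges_def by (auto simp: image_Un)
  moreover have "tree_size w' = Suc (tree_size w)"
    using run run' \<open>Suc j \<le> nx\<^sub>2\<close> unfolding tree_size_def by (simp add: shift_after_def)
  moreover have "length w' = length w + 2" unfolding w'_def w by simp
  ultimately show ?thesis using that by blast
qed


section \<open>Connected components and spanning trees\<close>

definition component :: "'a set set \<Rightarrow> 'a \<Rightarrow> 'a set" where
  "component E r = {v. (r, v) \<in> {(u, v). {u, v} \<in> E}\<^sup>*}"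

lemma root_in_component: "r \<in> component E r"
  by (simp add: component_def)

lemma component_closed: "u \<in> component E r \<Longrightarrow> {u, v} \<in> E \<Longrightarrow> v \<in> component E r"
  unfolding component_def by (auto intro: rtrancl_into_rtrancl)

lemma component_subset:
  assumes "\<Union>E \<subseteq> V" "r \<in> V"
  shows "component E r \<subseteq> V"
proof
  fix v assume "v \<in> component E r"
  then have "(r, v) \<in> {(u, v). {u, v} \<in> E}\<^sup>*" by (simp add: component_def)
  then show "v \<in> V" by induction (use assms in auto)
qed

lemma graph_union_induced_component:
  assumes "wf_graph G" "r \<in> verts G"
  defines "C \<equiv> component (edges G) r"
  shows "graph_union (induced G C) (induced G (verts G - C)) = G"
proof -
  have C: "C \<subseteq> verts G"
    unfolding C_def using assms by (intro component_subset wf_graph_edges_subset)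
  have "e \<subseteq> C \<or> e \<subseteq> verts G - C" if e: "e \<in> edges G" for e
  proof -
    obtain u v where uv: "e = {u, v}" "u \<in> verts G" "v \<in> verts G"
      using wf_graph_edgeD[OF assms(1) e] by blast
    moreover have "u \<in> C \<longleftrightarrow> v \<in> C"
      using component_closed[of _ "edges G" r] e uv(1)
      unfolding C_def by (metis insert_commute)
    ultimately show ?thesis by auto
  qed
  then have "edges G = {e \<in> edges G. e \<subseteq> C} \<union> {e \<in> edges G. e \<subseteq> verts G - C}" by blast
  then show ?thesis
    using C by (simp add: graph_union_def induced_def prod_eq_iff verts_def edges_def Un_absorb1)
qed

inductive grown_from :: "'a set set \<Rightarrow> 'a \<Rightarrow> 'a set \<Rightarrow> bool" for E r where
  grown_from_root: "grown_from E r {r}"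
| grown_from_insert: "grown_from E r S \<Longrightarrow> y \<in> S \<Longrightarrow> x \<notin> S \<Longrightarrow> {x, y} \<in> E \<Longrightarrow>
    grown_from E r (insert x S)"

lemma grown_from_finite: "grown_from E r S \<Longrightarrow> finite S \<and> r \<in> S"
  by (induction rule: grown_from.induct) auto

lemma grown_from_subset_component: "grown_from E r S \<Longrightarrow> S \<subseteq> component E r"
  by (induction rule: grown_from.induct)
    (auto simp: root_in_component insert_commute intro: component_closed)

lemma rtrancl_leaves_set:
  assumes "(a, b) \<in> R\<^sup>*" "a \<in> S" "b \<notin> S"
  obtains x y where "x \<in> S" "y \<notin> S" "(x, y) \<in> R"
  using assms by induction (auto intro: that)

lemma grown_from_component:
  assumes "finite (component E r)"
  shows "grown_from E r (component E r)"
proof -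
  let ?C = "component E r"
  have grown: "grown_from E r ?C" if "grown_from E r S" "card ?C - card S \<le> n" for S n
    using that
  proof (induction n arbitrary: S)
    case 0
    then have "S = ?C"
      using grown_from_subset_component[OF 0(1)] assms by (intro card_seteq) auto
    then show ?case using 0 by simp
  next
    case (Suc n)
    show ?case
    proof (cases "S = ?C")
      case False
      then obtain v where v: "v \<in> ?C" "v \<notin> S"
        using grown_from_subset_component[OF Suc.prems(1)] by blast
      have "(r, v) \<in> {(u, v). {u, v} \<in> E}\<^sup>*" using v(1) by (simp add: component_def)
      moreover have "r \<in> S" using grown_from_finite[OF Suc.prems(1)] by simp
      ultimately obtain y x where xy: "y \<in> S" "x \<notin> S" "(y, x) \<in> {(u, v). {u, v} \<in> E}"
        using v(2) by (rule rtrancl_leaves_set)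
      then have grown: "grown_from E r (insert x S)"
        using Suc.prems(1) by (intro grown_from_insert) (auto simp: insert_commute)
      have "card (insert x S) \<le> card ?C"
        using grown_from_subset_component[OF grown] assms by (rule card_mono[rotated])
      then have "card ?C - card (insert x S) \<le> n"
        using grown_from_finite[OF Suc.prems(1)] xy(2) Suc.prems(2) by simp
      then show ?thesis using Suc.IH grown by blast
    qed (use Suc.prems in simp)
  qed
  show ?thesis by (rule grown[OF grown_from_root order_refl])
qed

lemma grown_from_tree_word:
  assumes "grown_from E r S"
  obtains w \<phi> where "length w \<le> 2 * card S" "tree_size w = card S" "bij_betw \<phi> {0..<card S} S"
    "\<forall>(a, b)\<in>set (tree_edges w). {\<phi> a, \<phi> b} \<in> E"
  using assms
proof (induction arbitrary: thesis rule: grown_from.induct)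
  case grown_from_root
  have "tree_size [] = 1" "tree_edges [] = []" by (simp_all add: tree_size_def tree_edges_def)
  moreover have "bij_betw (\<lambda>_. r) {0..<1::nat} {r}" by (auto simp: bij_betw_def inj_on_def)
  ultimately show ?case by (intro grown_from_root.prems[of "[]"]) auto
next
  case (grown_from_insert S y x)
  obtain w \<phi> where lw: "length w \<le> 2 * card S" and size: "tree_size w = card S"
    and bij: "bij_betw \<phi> {0..<card S} S" and tree: "\<forall>(a, b)\<in>set (tree_edges w). {\<phi> a, \<phi> b} \<in> E"
    using grown_from_insert.IH by blast
  define s where "s = card S"
  obtain j where j: "j < s" "\<phi> j = y"
    using bij grown_from_insert.hyps(2) unfolding s_def bij_betw_def by (metis atLeastLessThan_iff imageE)
  obtain w' where lw': "length w' = length w + 2" and size': "tree_size w' = Suc (tree_size w)"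
    and tree': "set (tree_edges w') =
      map_prod (shift_after j) (shift_after j) ` set (tree_edges w) \<union> {(j, Suc j)}"
    using tree_word_add_leaf[of j w] j size s_def by auto
  define \<psi> where "\<psi> i = (if i \<le> j then \<phi> i else if i = Suc j then x else \<phi> (i - 1))" for i
  have \<psi>_shift: "\<psi> (shift_after j a) = \<phi> a" for a unfolding \<psi>_def shift_after_def by auto
  have card: "card (insert x S) = Suc s"
    using grown_from_finite[OF grown_from_insert.hyps(1)] grown_from_insert.hyps(3) s_def by simp
  have "\<psi> ` {0..<Suc s} = insert (\<psi> (Suc j)) (\<psi> ` shift_after j ` {0..<s})"
    using atLeastLessThan_Suc_shift_after[OF j(1)] by simp
  also have "\<psi> ` shift_after j ` {0..<s} = S"
    using bij s_def by (simp add: image_image \<psi>_shift bij_betw_def)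
  finally have img: "\<psi> ` {0..<Suc s} = insert x S" by (simp add: \<psi>_def)
  have "inj_on \<psi> {0..<Suc s}"
    using img card by (intro eq_card_imp_inj_on) auto
  then have bij': "bij_betw \<psi> {0..<card (insert x S)} (insert x S)"
    using img card by (simp add: bij_betw_def)
  have tree_edge: "{\<psi> a, \<psi> b} \<in> E" if ab: "(a, b) \<in> set (tree_edges w')" for a b
  proof -
    consider "(a, b) = (j, Suc j)"
      | a' b' where "(a', b') \<in> set (tree_edges w)" "a = shift_after j a'" "b = shift_after j b'"
      using ab tree' by auto
    then show ?thesis
    proof cases
      case 1
      then show ?thesis using j grown_from_insert.hyps(4) by (simp add: \<psi>_def insert_commute)
    qed (use tree \<psi>_shift in auto)
  qed
  show ?case
  proof (rule grown_from_insert.prems[of w' \<psi>])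
    show "length w' \<le> 2 * card (insert x S)" "tree_size w' = card (insert x S)"
      using lw lw' size size' card s_def by simp_all
    show "\<forall>(a, b)\<in>set (tree_edges w'). {\<psi> a, \<psi> b} \<in> E"
      using tree_edge by blast
  qed (fact bij')
qed


definition S_threshold :: "nat \<Rightarrow> nat" where
  "S_threshold d = 1000 ^ (10 * (d + 1))"

lemma S_class_iff:
  "G \<in> S_class d \<longleftrightarrow> wf_graph G \<and>
     (\<forall>H. subgraph H G \<longrightarrow> S_threshold d \<le> card (verts H) \<longrightarrow>
        real (card (edges H)) \<le> real (card (verts H)) - 1 + real (card (verts H)) / ln (real (card (verts H))))"
  unfolding S_class_def S_threshold_def using subgraph_card_verts_le by fastforce

lemma S_class_subgraph: "G \<in> S_class d \<Longrightarrow> subgraph H G \<Longrightarrow> H \<in> S_class d"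
  unfolding S_class_iff subgraph_def by (meson subgraph_trans[unfolded subgraph_def])

lemma S_class_induced_subgraph: "G \<in> S_class d \<Longrightarrow> induced_subgraph H G \<Longrightarrow> H \<in> S_class d"
  using S_class_subgraph induced_subgraph_imp_subgraph S_class_iff by blast

lemma S_class_graph_iso:
  assumes G: "G \<in> S_class d" and iso: "graph_iso G H"
  shows "H \<in> S_class d"
proof -
  obtain f where f: "inj_on f (verts G)" and H: "H = graph_image f G"
    using iso graph_iso_iff_graph_image by blast
  have wf: "wf_graph G" using G S_class_iff by blast
  define g where "g = inv_into (verts G) f"
  have g: "inj_on g (verts H)" using H inj_on_inv_into
    unfolding g_def graph_image_def by (metis order_refl verts_pair)
  have G_eq: "G = graph_image g H"
    unfolding H g_def using graph_image_inv_into[OF wf_graph_edges_subset[OF wf] f] by simp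
  have "wf_graph H"
    using subgraph_graph_image[OF _ f, of G] wf unfolding H subgraph_def by simp
  moreover have "real (card (edges H')) \<le>
      real (card (verts H')) - 1 + real (card (verts H')) / ln (real (card (verts H')))"
    if "subgraph H' H" "S_threshold d \<le> card (verts H')" for H'
  proof -
    have H': "\<Union>(edges H') \<subseteq> verts H'" "inj_on g (verts H')"
      using that(1) wf_graph_edges_subset g inj_on_subset unfolding subgraph_def by blast+
    have "subgraph (graph_image g H') G"
      using subgraph_graph_image[OF that(1) g] G_eq by simp
    then show ?thesis
      using G that(2) card_graph_image[OF H'] unfolding S_class_iff by metis
  qed
  ultimately show ?thesis unfolding S_class_iff by blast
qed


section \<open>Encoding the graphs of the class\<close>

definition extra_edges_bound :: "nat \<Rightarrow> nat \<Rightarrow> nat" where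
  "extra_edges_bound d s = (if s < S_threshold d then s * s else nat \<lfloor>real s / ln (real s)\<rfloor>)"

definition component_codes :: "nat \<Rightarrow> nat \<Rightarrow> (bool list \<times> (nat \<times> nat) set) set" where
  "component_codes d s = {(w, A). length w \<le> 2 * s \<and> tree_size w = s \<and>
     A \<subseteq> {0..<s} \<times> {0..<s} \<and> card A \<le> extra_edges_bound d s}"

fun code_graph :: "nat \<Rightarrow> bool list \<times> (nat \<times> nat) set \<Rightarrow> nat graph" where
  "code_graph s (w, A) = ({0..<s}, (\<lambda>(a, b). {a, b}) ` (set (tree_edges w) \<union> A))"

definition compositions :: "(nat \<Rightarrow> 'c set) \<Rightarrow> nat \<Rightarrow> (nat \<times> 'c) list set" where
  "compositions P n = {cl. (\<forall>(s, c)\<in>set cl. 0 < s \<and> c \<in> P s) \<and> sum_list (map fst cl) = n}"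

fun decode :: "(nat \<times> bool list \<times> (nat \<times> nat) set) list \<Rightarrow> nat graph" where
  "decode [] = ({}, {})"
| "decode ((s, c) # cl) = graph_union (code_graph s c) (graph_image ((+) s) (decode cl))"

lemma verts_code_graph: "verts (code_graph s c) = {0..<s}"
  by (cases c) simp

lemma edges_code_graph_subset:
  "c \<in> component_codes d s \<Longrightarrow> \<Union>(edges (code_graph s c)) \<subseteq> verts (code_graph s c)"
  by (cases c) (fastforce simp: component_codes_def dest: tree_edges_bounds)

lemma edges_graph_union_subset:
  "\<Union>(edges G) \<subseteq> verts G \<Longrightarrow> \<Union>(edges H) \<subseteq> verts H \<Longrightarrow>
    \<Union>(edges (graph_union G H)) \<subseteq> verts (graph_union G H)"
  by (auto simp: graph_union_def)

lemma edges_decode_subset: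
  "cl \<in> compositions (component_codes d) n \<Longrightarrow> \<Union>(edges (decode cl)) \<subseteq> verts (decode cl)"
proof (induction cl arbitrary: n rule: decode.induct)
  case (2 s c cl)
  have "c \<in> component_codes d s" "cl \<in> compositions (component_codes d) (n - s)"
    using "2.prems" unfolding compositions_def by auto
  then show ?case
    using "2.IH" by (simp add: edges_graph_union_subset edges_code_graph_subset edges_graph_image_subset)
qed simp

lemma bij_betw_pair_edges:
  fixes \<phi> :: "nat \<Rightarrow> 'a"
  assumes bij: "bij_betw \<phi> {0..<s} C" and E: "\<And>e. e \<in> E \<Longrightarrow> \<exists>u v. e = {u, v} \<and> u \<noteq> v"
  shows "bij_betw (\<lambda>(a, b). {\<phi> a, \<phi> b}) {(a, b). a < b \<and> b < s \<and> {\<phi> a, \<phi> b} \<in> E} {e \<in> E. e \<subseteq> C}"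
proof -
  let ?P = "{(a, b). a < b \<and> b < s \<and> {\<phi> a, \<phi> b} \<in> E}"
  have inj: "inj_on \<phi> {0..<s}" and img: "\<phi> ` {0..<s} = C"
    using bij by (simp_all add: bij_betw_def)
  have "inj_on (\<lambda>(a, b). {\<phi> a, \<phi> b}) ?P"
  proof (rule inj_onI)
    fix p q assume "p \<in> ?P" "q \<in> ?P" and eq: "(\<lambda>(a, b). {\<phi> a, \<phi> b}) p = (\<lambda>(a, b). {\<phi> a, \<phi> b}) q"
    moreover obtain a b a' b' where pq: "p = (a, b)" "q = (a', b')" by (cases p, cases q)
    ultimately have ord: "a < b" "b < s" "a' < b'" "b' < s" and img_eq: "\<phi> ` {a, b} = \<phi> ` {a', b'}"
      by auto
    have sub: "{a, b} \<subseteq> {0..<s}" "{a', b'} \<subseteq> {0..<s}" using ord by auto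
    have "{a, b} = {a', b'}" by (rule inj_on_image_eq_iff[OF inj sub, THEN iffD1, OF img_eq])
    then show "p = q" using ord pq by (auto simp: doubleton_eq_iff)
  qed
  moreover have "(\<lambda>(a, b). {\<phi> a, \<phi> b}) ` ?P = {e \<in> E. e \<subseteq> C}"
  proof (intro equalityI subsetI)
    fix e assume "e \<in> (\<lambda>(a, b). {\<phi> a, \<phi> b}) ` ?P"
    then show "e \<in> {e \<in> E. e \<subseteq> C}" using img by auto
  next
    fix e assume e: "e \<in> {e \<in> E. e \<subseteq> C}"
    then obtain u v where uv: "e = {u, v}" "u \<noteq> v" using E by blast
    have "u \<in> \<phi> ` {0..<s}" "v \<in> \<phi> ` {0..<s}" using e uv img by auto
    then obtain a b where ab: "a < s" "b < s" "\<phi> a = u" "\<phi> b = v" by auto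
    then have "a \<noteq> b" using uv by auto
    then have "(min a b, max a b) \<in> ?P" "e = {\<phi> (min a b), \<phi> (max a b)}"
      using ab e uv by (auto simp: min_def max_def insert_commute)
    then show "e \<in> (\<lambda>(a, b). {\<phi> a, \<phi> b}) ` ?P"
      by (intro image_eqI[where x = "(min a b, max a b)"]) simp_all
  qed
  ultimately show ?thesis by (simp add: bij_betw_def)
qed

lemma S_class_excess_edges:
  assumes G: "G \<in> S_class d" and X: "X \<subseteq> verts G" "S_threshold d \<le> card X"
    and card_edges: "card {e \<in> edges G. e \<subseteq> X} = card X - 1 + m"
  shows "m \<le> nat \<lfloor>real (card X) / ln (real (card X))\<rfloor>"
proof -
  have "1 \<le> S_threshold d" by (simp add: S_threshold_def)
  then have X1: "1 \<le> card X" using X(2) by linarith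
  have bound: "\<And>H. subgraph H G \<Longrightarrow> S_threshold d \<le> card (verts H) \<Longrightarrow>
      real (card (edges H)) \<le> real (card (verts H)) - 1 + real (card (verts H)) / ln (real (card (verts H)))"
    using G unfolding S_class_iff by blast
  have "subgraph (induced G X) G"
    using G X(1) by (intro subgraph_induced) (simp_all add: S_class_iff)
  from bound[OF this] have "real (card X - 1 + m) \<le> real (card X) - 1 + real (card X) / ln (real (card X))"
    using X(2) card_edges by (simp add: induced_def)
  then have "real m \<le> real (card X) / ln (real (card X))" using X1 by (simp add: of_nat_diff)
  then show ?thesis by (simp add: le_nat_floor)
qed

lemma component_code:
  assumes G: "G \<in> S_class d" and r: "r \<in> verts G"
  defines "C \<equiv> component (edges G) r"
  obtains c \<phi> where "c \<in> component_codes d (card C)" "inj_on \<phi> {0..<card C}"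
    "induced G C = graph_image \<phi> (code_graph (card C) c)"
proof -
  define s where "s = card C"
  have wf: "wf_graph G" using G by (simp add: S_class_iff)
  have C: "C \<subseteq> verts G"
    unfolding C_def using wf r by (intro component_subset wf_graph_edges_subset)
  then have "finite C" using wf finite_subset by (auto simp: wf_graph_def)
  then obtain w \<phi> where length_w: "length w \<le> 2 * s" and size_w: "tree_size w = s"
    and bij: "bij_betw \<phi> {0..<s} C" and tree: "\<forall>(a, b)\<in>set (tree_edges w). {\<phi> a, \<phi> b} \<in> edges G"
    using grown_from_tree_word[OF grown_from_component] unfolding s_def C_def by metis
  define P where "P = {(a, b). a < b \<and> b < s \<and> {\<phi> a, \<phi> b} \<in> edges G}"
  define A where "A = P - set (tree_edges w)"
  have P_bij: "bij_betw (\<lambda>(a, b). {\<phi> a, \<phi> b}) P {e \<in> edges G. e \<subseteq> C}"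
    unfolding P_def using bij wf_graph_edgeD[OF wf] by (intro bij_betw_pair_edges) blast+
  have T_P: "set (tree_edges w) \<subseteq> P"
    using tree tree_edges_bounds size_w unfolding P_def by fastforce
  have P: "P = set (tree_edges w) \<union> A" "set (tree_edges w) \<inter> A = {}"
    using T_P unfolding A_def by auto
  have A_square: "A \<subseteq> {0..<s} \<times> {0..<s}" unfolding A_def P_def by auto
  have "card A \<le> extra_edges_bound d s"
  proof (cases "s < S_threshold d")
    case True
    have "card A \<le> card ({0..<s} \<times> {0..<s})" using A_square by (intro card_mono) auto
    then show ?thesis using True by (simp add: extra_edges_bound_def)
  next
    case False
    have "card {e \<in> edges G. e \<subseteq> C} = card P" using bij_betw_same_card[OF P_bij] by simp
    also have "\<dots> = s - 1 + card A"
      using P card_tree_edges[of w] size_w finite_subset[OF A_square]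
      by (simp add: card_Un_disjoint)
    finally show ?thesis
      using S_class_excess_edges[OF G C] False unfolding s_def extra_edges_bound_def by simp
  qed
  then have "(w, A) \<in> component_codes d s"
    unfolding component_codes_def using length_w size_w A_square by simp
  moreover have "induced G C = graph_image \<phi> (code_graph s (w, A))"
  proof -
    have "(`) \<phi> ` (\<lambda>(a, b). {a, b}) ` P = (\<lambda>(a, b). {\<phi> a, \<phi> b}) ` P"
      by (auto simp: image_image case_prod_beta)
    then show ?thesis
      using P_bij bij unfolding graph_image_def induced_def
      by (simp add: bij_betw_def P(1)[symmetric])
  qed
  ultimately show ?thesis using that bij bij_betw_imp_inj_on unfolding s_def by blast
qed

lemma graph_image_decode_Cons:
  assumes c: "c \<in> component_codes d s" and cl: "cl \<in> compositions (component_codes d) n"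
    and \<phi>: "inj_on \<phi> {0..<s}" and f: "inj_on f (verts (decode cl))"
    and disjoint: "\<phi> ` {0..<s} \<inter> f ` verts (decode cl) = {}"
  defines "g \<equiv> \<lambda>x. if x < s then \<phi> x else f (x - s)"
  shows "inj_on g (verts (decode ((s, c) # cl)))"
    and "graph_image g (decode ((s, c) # cl)) =
      graph_union (graph_image \<phi> (code_graph s c)) (graph_image f (decode cl))"
proof -
  let ?D = "code_graph s c" and ?D' = "graph_image ((+) s) (decode cl)"
  have verts_D: "verts ?D = {0..<s}" by (rule verts_code_graph)
  have g: "g = (\<lambda>x. if x \<in> verts ?D then \<phi> x else f (x - s))"
    unfolding g_def verts_D by auto
  have shift: "(\<lambda>x. f (x - s)) \<circ> (+) s = f" by auto
  then have "inj_on (\<lambda>x. f (x - s)) (verts ?D')"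
    using f by (simp add: graph_image_def inj_on_imageI)
  moreover have "(\<lambda>x. f (x - s)) ` verts ?D' = f ` verts (decode cl)"
    using shift by (simp add: graph_image_def image_comp)
  ultimately show "inj_on g (verts (decode ((s, c) # cl)))"
    unfolding g decode.simps(2) using \<phi> disjoint verts_D by (intro inj_on_if_graph_union) simp_all
  have "verts ?D \<inter> verts ?D' = {}" using verts_D by (auto simp: graph_image_def)
  then show "graph_image g (decode ((s, c) # cl)) =
      graph_union (graph_image \<phi> ?D) (graph_image f (decode cl))"
    unfolding g using edges_code_graph_subset[OF c] edges_decode_subset[OF cl]
    by (simp add: graph_image_if_union edges_graph_image_subset graph_image_comp shift)
qed

lemma S_class_decode:
  assumes "G \<in> S_class d"
  obtains cl f where "cl \<in> compositions (component_codes d) (card (verts G))"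
    "inj_on f (verts (decode cl))" "G = graph_image f (decode cl)"
  using assms
proof (induction "card (verts G)" arbitrary: G thesis rule: less_induct)
  case less
  have wf: "wf_graph G" using less.prems(2) by (simp add: S_class_iff)
  show ?case
  proof (cases "verts G = {}")
    case True
    then have "edges G = {}" using wf_graph_edgeD[OF wf] by fastforce
    then have "G = graph_image f (decode [])" for f :: "nat \<Rightarrow> 'a"
      using True by (simp add: graph_image_def prod_eq_iff verts_def edges_def)
    then show ?thesis
      using True by (intro less.prems(1)[of "[]" undefined]) (simp_all add: compositions_def)
  next
    case False
    then obtain r where r: "r \<in> verts G" by blast
    define C where "C = component (edges G) r"
    obtain c \<phi> where c: "c \<in> component_codes d (card C)" and \<phi>: "inj_on \<phi> {0..<card C}"
      and G_C: "induced G C = graph_image \<phi> (code_graph (card C) c)"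
      using component_code[OF less.prems(2) r] unfolding C_def by blast
    have C: "C \<subseteq> verts G" "r \<in> C"
      unfolding C_def using wf r by (simp_all add: component_subset wf_graph_edges_subset root_in_component)
    have fin: "finite (verts G)" using wf by (simp add: wf_graph_def)
    define G' where "G' = induced G (verts G - C)"
    have G': "G' \<in> S_class d"
      unfolding G'_def using less.prems(2) wf by (blast intro: S_class_subgraph subgraph_induced)
    have card: "card (verts G) = card C + card (verts G')"
      using C fin by (simp add: G'_def induced_def card_Diff_subset card_mono finite_subset)
    moreover have "0 < card C" using C fin finite_subset by (auto simp: card_gt_0_iff)
    ultimately obtain cl' f' where cl': "cl' \<in> compositions (component_codes d) (card (verts G'))"
      and f': "inj_on f' (verts (decode cl'))" and G'_eq: "G' = graph_image f' (decode cl')"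
      using less.hyps[of G'] G' by auto
    have "\<phi> ` {0..<card C} = C"
      using arg_cong[OF G_C, of verts] by (simp add: graph_image_def induced_def verts_code_graph)
    moreover have "f' ` verts (decode cl') = verts G - C"
      using arg_cong[OF G'_eq, of verts] by (simp add: graph_image_def G'_def induced_def)
    ultimately have "\<phi> ` {0..<card C} \<inter> f' ` verts (decode cl') = {}" by auto
    note glue = graph_image_decode_Cons[OF c cl' \<phi> f' this]
    have "G = graph_union (induced G C) G'"
      unfolding G'_def C_def using graph_union_induced_component[OF wf r] by simp
    then have "G = graph_image (\<lambda>x. if x < card C then \<phi> x else f' (x - card C)) (decode ((card C, c) # cl'))"
      using glue(2) G_C G'_eq by simp
    moreover have "(card C, c) # cl' \<in> compositions (component_codes d) (card (verts G))"
      using cl' c card \<open>0 < card C\<close> by (simp add: compositions_def)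
    ultimately show ?thesis using less.prems(1) glue(1) by blast
  qed
qed


section \<open>Counting\<close>

lemma compositions_0: "compositions P 0 = {[]}"
proof -
  have "cl = []" if "cl \<in> compositions P 0" for cl
  proof (cases cl)
    case (Cons sc cl')
    then show ?thesis using that by (cases sc) (simp add: compositions_def)
  qed
  then show ?thesis by (auto simp: compositions_def)
qed

lemma compositions_subset_Cons:
  assumes "0 < n"
  shows "compositions P n \<subseteq> (\<Union>s\<in>{1..n}. (\<lambda>(c, cl). (s, c) # cl) ` (P s \<times> compositions P (n - s)))"
proof
  fix cl assume cl: "cl \<in> compositions P n"
  then obtain s c cl' where Cons: "cl = (s, c) # cl'"
    using assms by (cases cl) (auto simp: compositions_def)
  have "s \<in> {1..n}" "(c, cl') \<in> P s \<times> compositions P (n - s)"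
    using cl unfolding Cons compositions_def by auto
  then show "cl \<in> (\<Union>s\<in>{1..n}. (\<lambda>(c, cl). (s, c) # cl) ` (P s \<times> compositions P (n - s)))"
    unfolding Cons by (intro UN_I[of s] image_eqI[of _ _ "(c, cl')"]) simp_all
qed

lemma sum_power2_diff_less: "(\<Sum>s\<in>{1..n}. (2::nat) ^ (n - s)) < 2 ^ n"
proof (induction n)
  case (Suc n)
  have "(\<Sum>s\<in>{1..Suc n}. (2::nat) ^ (Suc n - s)) = 2 * (\<Sum>s\<in>{1..n}. 2 ^ (n - s)) + 1"
    by (simp add: sum_distrib_left Suc_diff_le power_Suc[symmetric] del: power_Suc)
  then show ?case using Suc.IH by simp
qed simp

lemma card_compositions:
  assumes fin: "\<And>s. finite (P s)" and card: "\<And>s. 0 < s \<Longrightarrow> card (P s) \<le> B ^ s"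
  shows "finite (compositions P n) \<and> card (compositions P n) \<le> (2 * B) ^ n"
proof (induction n rule: less_induct)
  case (less n)
  show ?case
  proof (cases "n = 0")
    case False
    let ?F = "\<lambda>s. (\<lambda>(c, cl). (s, c) # cl) ` (P s \<times> compositions P (n - s))"
    have fin_F: "finite (?F s)" and card_F: "card (?F s) \<le> B ^ n * 2 ^ (n - s)" if "s \<in> {1..n}" for s
    proof -
      have IH: "finite (compositions P (n - s))" "card (compositions P (n - s)) \<le> (2 * B) ^ (n - s)"
        using less.IH[of "n - s"] that by auto
      then show "finite (?F s)" using fin by simp
      have "card (?F s) \<le> card (P s) * card (compositions P (n - s))"
        using card_image_le IH(1) fin by (metis card_cartesian_product finite_cartesian_product)
      also have "\<dots> \<le> B ^ s * (2 * B) ^ (n - s)"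
        using card IH(2) that by (intro mult_mono) auto
      also have "\<dots> = B ^ n * 2 ^ (n - s)"
        using that by (simp add: power_mult_distrib power_add[symmetric])
      finally show "card (?F s) \<le> B ^ n * 2 ^ (n - s)" .
    qed
    have sub: "compositions P n \<subseteq> (\<Union>s\<in>{1..n}. ?F s)"
      using compositions_subset_Cons[of n P] False by simp
    moreover have "finite (\<Union>s\<in>{1..n}. ?F s)" using fin_F by blast
    moreover have "card (\<Union>s\<in>{1..n}. ?F s) \<le> (2 * B) ^ n"
    proof -
      have "card (\<Union>s\<in>{1..n}. ?F s) \<le> (\<Sum>s\<in>{1..n}. B ^ n * 2 ^ (n - s))"
        using card_UN_le[of "{1..n}" ?F] card_F by (meson finite_atLeastAtMost order_trans sum_mono)
      also have "\<dots> \<le> B ^ n * 2 ^ n"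
        using sum_power2_diff_less[of n] by (simp add: sum_distrib_left[symmetric])
      finally show ?thesis by (simp add: power_mult_distrib mult.commute)
    qed
    ultimately show ?thesis by (meson card_mono finite_subset order_trans)
  qed (simp add: compositions_0)
qed

lemma card_bool_lists_le: "card {w :: bool list. length w \<le> n} \<le> 2 ^ Suc n"
proof -
  have "card {w :: bool list. length w \<le> n} = (\<Sum>i<Suc n. 2 ^ i)"
    using card_lists_length_le[of "UNIV :: bool set" n] by (simp add: lessThan_Suc_atMost)
  also have "\<dots> < 2 ^ Suc n" using sum_power2[of "Suc n"] by (simp add: atLeast0LessThan)
  finally show ?thesis by simp
qed

lemma sum_powers_le_Suc_power: "(\<Sum>i\<le>a. n ^ i) \<le> (n + 1 :: nat) ^ a"
proof -
  have "(\<Sum>i\<le>a. n ^ i) \<le> (\<Sum>i\<le>a. (a choose i) * n ^ i * 1 ^ (a - i))"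
    by (intro sum_mono) (simp add: Suc_leI zero_less_binomial)
  also have "\<dots> = (n + 1) ^ a" using binomial[of n 1 a] by simp
  finally show ?thesis .
qed

lemma card_subsets_card_le:
  assumes "finite X"
  shows "card {A. A \<subseteq> X \<and> card A \<le> a} \<le> (card X + 1) ^ a"
proof -
  let ?L = "{xs. set xs \<subseteq> X \<and> length xs \<le> a}"
  have fin: "finite ?L" using assms by (rule finite_lists_length_le)
  have "{A. A \<subseteq> X \<and> card A \<le> a} \<subseteq> set ` ?L"
  proof
    fix A assume A: "A \<in> {A. A \<subseteq> X \<and> card A \<le> a}"
    then obtain xs where "set xs = A" "distinct xs"
      using assms finite_distinct_list finite_subset by blast
    then show "A \<in> set ` ?L"
      using A distinct_card by fastforce
  qed
  then have "card {A. A \<subseteq> X \<and> card A \<le> a} \<le> card (set ` ?L)"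
    using fin by (intro card_mono) simp_all
  also have "\<dots> \<le> card ?L" using fin by (rule card_image_le)
  also have "\<dots> \<le> (card X + 1) ^ a"
    using assms sum_powers_le_Suc_power by (simp add: card_lists_length_le)
  finally show ?thesis .
qed

lemma power_extra_edges_bound_le:
  fixes d s :: nat
  assumes "0 < s"
  defines "K \<equiv> S_threshold d"
  shows "(s * s + 1) ^ extra_edges_bound d s \<le> (27 * (K * K + 1) ^ K) ^ s"
proof (cases "s < K")
  case True
  have "(s * s + 1) ^ (s * s) \<le> (K * K + 1) ^ (s * s)"
    using True by (intro power_mono) (auto intro: mult_mono)
  also have "\<dots> \<le> (K * K + 1) ^ (K * s)"
    using True by (intro power_increasing) auto
  also have "\<dots> \<le> (27 * (K * K + 1) ^ K) ^ s"
    by (simp add: power_mult power_mult_distrib)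
  finally show ?thesis using True by (simp add: extra_edges_bound_def K_def)
next
  case False
  define g where "g = nat \<lfloor>real s / ln (real s)\<rfloor>"
  have "1000 \<le> K" unfolding K_def S_threshold_def
    using power_increasing[of 1 "10 * (d + 1)" "1000 :: nat"] by simp
  then have s3: "3 \<le> s" using False by linarith
  then have "real g \<le> real s / ln (real s)" unfolding g_def by (intro of_nat_floor) simp
  then have g_ln: "real g * ln (real s) \<le> real s" using s3 by (simp add: field_simps)
  have "s * s + 1 \<le> s * s * 2" using s3 by simp
  also have "\<dots> \<le> s * s * s" using s3 by (intro mult_left_mono) auto
  finally have "(s * s + 1) ^ g \<le> (s ^ 3) ^ g" by (intro power_mono) (simp_all add: power3_eq_cube)
  then have "real ((s * s + 1) ^ g) \<le> real s ^ (3 * g)"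
    by (metis of_nat_le_iff of_nat_power power_mult)
  also have "\<dots> = exp (ln (real s)) ^ (3 * g)" using s3 by simp
  also have "\<dots> = exp (real (3 * g) * ln (real s))" by (rule exp_of_nat_mult[symmetric])
  also have "\<dots> \<le> exp (real (3 * s))" using g_ln by simp
  also have "\<dots> = exp 1 ^ (3 * s)" using exp_of_nat_mult[of "3 * s" 1] by simp
  also have "\<dots> \<le> 3 ^ (3 * s)" using exp_le by (intro power_mono) auto
  also have "\<dots> = real (27 ^ s)" by (simp add: power_mult)
  finally have "(s * s + 1) ^ g \<le> 27 ^ s" by (simp only: of_nat_le_iff)
  also have "\<dots> \<le> (27 * (K * K + 1) ^ K) ^ s" by (intro power_mono) auto
  finally show ?thesis using False by (simp add: extra_edges_bound_def K_def g_def)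
qed

definition code_base :: "nat \<Rightarrow> nat" where
  "code_base d = 8 * (27 * (S_threshold d * S_threshold d + 1) ^ S_threshold d)"

lemma finite_component_codes: "finite (component_codes d s)"
proof -
  have "component_codes d s \<subseteq> {w :: bool list. length w \<le> 2 * s} \<times> Pow ({0..<s} \<times> {0..<s})"
    unfolding component_codes_def by auto
  moreover have "finite {w :: bool list. length w \<le> 2 * s}"
    using finite_lists_length_le[of "UNIV :: bool set"] by simp
  ultimately show ?thesis by (simp add: finite_subset)
qed

lemma card_component_codes:
  assumes "0 < s"
  shows "card (component_codes d s) \<le> code_base d ^ s"
proof -
  let ?W = "{w :: bool list. length w \<le> 2 * s}"
    and ?S = "{A. A \<subseteq> {0..<s} \<times> {0..<s} \<and> card A \<le> extra_edges_bound d s}"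
    and ?M = "27 * (S_threshold d * S_threshold d + 1) ^ S_threshold d"
  have fin: "finite ?W" "finite ?S"
    using finite_lists_length_le[of "UNIV :: bool set"] by auto
  have "component_codes d s \<subseteq> ?W \<times> ?S" unfolding component_codes_def by auto
  then have "card (component_codes d s) \<le> card (?W \<times> ?S)"
    using fin by (intro card_mono) simp_all
  also have "\<dots> = card ?W * card ?S" by (rule card_cartesian_product)
  also have "\<dots> \<le> 2 ^ Suc (2 * s) * (s * s + 1) ^ extra_edges_bound d s"
    by (rule mult_mono) (use card_bool_lists_le card_subsets_card_le[of "{0..<s} \<times> {0..<s}"] in simp_all)
  also have "\<dots> \<le> 8 ^ s * ?M ^ s"
  proof (rule mult_mono)
    have "(2::nat) ^ Suc (2 * s) = 2 * 4 ^ s" by (simp add: power_mult)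
    also have "\<dots> \<le> 2 ^ s * 4 ^ s" using assms by (intro mult_right_mono) (auto simp: self_le_power)
    finally show "(2::nat) ^ Suc (2 * s) \<le> 8 ^ s" by (simp add: power_mult_distrib[symmetric])
    show "(s * s + 1) ^ extra_edges_bound d s \<le> ?M ^ s"
      by (rule power_extra_edges_bound_le[OF assms])
  qed simp_all
  also have "\<dots> = code_base d ^ s" by (simp only: code_base_def power_mult_distrib)
  finally show ?thesis .
qed

lemma card_iso_classes_le:
  fixes rep :: "'c \<Rightarrow> 'b graph" and \<C> :: "'a graph set"
  assumes fin: "finite B" and rep: "\<And>c. c \<in> B \<Longrightarrow> \<Union>(edges (rep c)) \<subseteq> verts (rep c)"
    and cover: "\<And>G. G \<in> \<C> \<Longrightarrow> \<exists>c\<in>B. \<exists>f. inj_on f (verts (rep c)) \<and> G = graph_image f (rep c)"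
  defines "R \<equiv> {(G, H). G \<in> \<C> \<and> H \<in> \<C> \<and> graph_iso G H}"
  shows "finite (\<C> // R) \<and> card (\<C> // R) \<le> card B"
proof -
  define images where "images c = {H \<in> \<C>. \<exists>f. inj_on f (verts (rep c)) \<and> H = graph_image f (rep c)}" for c
  have class_eq: "R `` {G} = images c"
    if c: "c \<in> B" and G: "G \<in> \<C>" "inj_on f (verts (rep c))" "G = graph_image f (rep c)" for G c f
  proof (intro set_eqI iffI)
    fix H assume "H \<in> R `` {G}"
    then obtain h where H: "H \<in> \<C>" "inj_on h (verts G)" "H = graph_image h G"
      unfolding R_def graph_iso_iff_graph_image by blast
    have "inj_on (h \<circ> f) (verts (rep c))"
      using G(2,3) H(2) by (simp add: comp_inj_on graph_image_def)
    moreover have "H = graph_image (h \<circ> f) (rep c)"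
      using G(3) H(3) by (simp add: graph_image_comp)
    ultimately show "H \<in> images c"
      unfolding images_def using H(1) by blast
  next
    fix H assume "H \<in> images c"
    then obtain h where H: "H \<in> \<C>" "inj_on h (verts (rep c))" "H = graph_image h (rep c)"
      unfolding images_def by blast
    define g where "g = inv_into (verts (rep c)) f"
    have "rep c = graph_image g G"
      unfolding g_def G(3) using graph_image_inv_into[OF rep[OF c] G(2)] by simp
    moreover have "g ` verts G = verts (rep c)" "inj_on g (verts G)"
      unfolding g_def G(3) graph_image_def using G(2) by (simp_all add: inj_on_inv_into)
    ultimately have "H = graph_image (h \<circ> g) G" "inj_on (h \<circ> g) (verts G)"
      using H by (simp_all add: graph_image_comp comp_inj_on)
    then show "H \<in> R `` {G}"
      unfolding R_def graph_iso_iff_graph_image using G(1) H(1) by blast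
  qed
  have sub: "\<C> // R \<subseteq> images ` B"
  proof (rule subsetI, elim quotientE)
    fix X G assume G: "G \<in> \<C>" and X: "X = R `` {G}"
    then obtain c f where "c \<in> B" "inj_on f (verts (rep c))" "G = graph_image f (rep c)"
      using cover by blast
    then show "X \<in> images ` B" using class_eq[OF _ G] X by blast
  qed
  have "finite (images ` B)" using fin by simp
  then have "card (\<C> // R) \<le> card (images ` B)" using sub by (rule card_mono)
  also have "\<dots> \<le> card B" using fin by (rule card_image_le)
  finally show ?thesis using sub \<open>finite (images ` B)\<close> finite_subset by blast
qed

lemma card_S_class_iso_classes:
  fixes d n :: nat
  defines "\<C> \<equiv> {G \<in> (S_class d :: 'a graph set). card (verts G) = n}"
  shows "finite (\<C> // {(G, H). G \<in> \<C> \<and> H \<in> \<C> \<and> graph_iso G H}) \<and>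
    real (card (\<C> // {(G, H). G \<in> \<C> \<and> H \<in> \<C> \<and> graph_iso G H})) \<le> real (2 * code_base d) ^ n"
proof -
  have codes: "finite (compositions (component_codes d) n)"
    "card (compositions (component_codes d) n) \<le> (2 * code_base d) ^ n"
    using card_compositions[OF finite_component_codes card_component_codes] by auto
  have cover: "\<exists>cl\<in>compositions (component_codes d) n.
      \<exists>f. inj_on f (verts (decode cl)) \<and> G = graph_image f (decode cl)" if "G \<in> \<C>" for G
  proof -
    have G: "G \<in> S_class d" "card (verts G) = n" using that unfolding \<C>_def by auto
    obtain cl f where "cl \<in> compositions (component_codes d) (card (verts G))"
      "inj_on f (verts (decode cl))" "G = graph_image f (decode cl)"
      by (rule S_class_decode[OF G(1)])
    then show ?thesis using G(2) by blast
  qed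
  have "finite (\<C> // {(G, H). G \<in> \<C> \<and> H \<in> \<C> \<and> graph_iso G H}) \<and>
      card (\<C> // {(G, H). G \<in> \<C> \<and> H \<in> \<C> \<and> graph_iso G H}) \<le> card (compositions (component_codes d) n)"
    by (rule card_iso_classes_le[where rep = decode, OF codes(1)]) (simp_all add: edges_decode_subset cover)
  moreover have "real (card (compositions (component_codes d) n)) \<le> real (2 * code_base d) ^ n"
    using codes(2) by (metis of_nat_le_iff of_nat_power)
  ultimately show ?thesis by linarith
qed

theorem mainTheorem8:
  fixes d :: nat
  shows "monotone_class (S_class d :: 'a graph set) \<and> tiny_class (S_class d :: 'a graph set)"
proof
  show "monotone_class (S_class d :: 'a graph set)"
    unfolding monotone_class_def using S_class_graph_iso S_class_subgraph by blast
  have "hereditary_class (S_class d :: 'a graph set)"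
    unfolding hereditary_class_def using S_class_induced_subgraph by blast
  then show "tiny_class (S_class d :: 'a graph set)"
    unfolding tiny_class_def Let_def using card_S_class_iso_classes[of d] by blast
qed

end
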